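(* Let $n\in\mathbb N$ be even. On $\pm[n]:=\{-n,\ldots,-1,1,\ldots,n\}$ let $$\tau_0=(1,-1)(2,-2)\cdots(n,-n),\qquad \tau_2=(-1,2)(-2,3)\cdots(-(n-1),n)(-n,1),$$ and let $\widetilde{1}_n=(1,2,\ldots,n)(-n,-n+1,\ldots,-1)$. Let $b_1(n)$ be the set of fixed-point-free involutions $\tau_1$ of $\pm[n]$ such that $\#(\tau_2\tau_1)=n$, $\tau_0\tau_1=\tau_1\tau_0$, $\tau_0\tau_1$ is fixed-point free, and there exists $a\in[n]$ with $\tau_1(a)\in[n]$. Let $\mathrm{NC}_2^\delta(n,-n)$ be the set of fixed-point-free involutions $\pi$ of $\pm[n]$ such that: (i) the group $\langle \pi,\widetilde 1_n\rangle$ acts transitively on $\pm[n]$; (ii) $\#(\pi)+\#(\pi^{-1}\widetilde{1}_n)+\#(\widetilde 1_n)=2n+2$; (iii) for no $r\in[n]$ is $(-r,r)$ a cycle of $\pi$; (iv) whenever $(r,s)$ is a cycle of $\pi$, so is $(-s,-r)$. Then the map $\varphi_1:b_1(n)\to\mathrm{NC}_2^\delta(n,-n)$, $\tau_1\mapsto\tau_1\tau_0$, is well defined and is a bijection.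
   Context: Permutations are composed right to left, i.e. $(\sigma\rho)(x)=\sigma(\rho(x))$. For a permutation $\sigma$, $\#(\sigma)$ denotes its number of cycles, with fixed points counted as cycles. $[n]=\{1,\ldots,n\}$. The set $b_1(n)$ is a combinatorial encoding of the non-orientable ribbon graphs of Euler genus $1$ built from one $n$-gon, and $\mathrm{NC}_2^\delta(n,-n)$ is the set of symmetric non-crossing annular pairings of $\pm[n]$. *)

theory Defs
  imports "HOL-Combinatorics.Permutations"
begin

text \<open>Permutations of the finite set pm n = {-n..-1} \<union> {1..n} are modelled as
  functions int \<Rightarrow> int that permute pm n (identity outside).
  Composition is right to left: (\<sigma> \<circ> \<rho>) x = \<sigma> (\<rho> x).\<close>

definition pm :: "nat \<Rightarrow> int set" where
  "pm n = {x. 1 \<le> \<bar>x\<bar> \<and> \<bar>x\<bar> \<le> int n}"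

definition pos :: "nat \<Rightarrow> int set" where
  "pos n = {1..int n}"

definition tau0 :: "nat \<Rightarrow> int \<Rightarrow> int" where
  "tau0 n x = (if x \<in> pm n then - x else x)"

text \<open>tau2 = (-1,2)(-2,3)...(-(n-1),n)(-n,1)\<close>
definition tau2 :: "nat \<Rightarrow> int \<Rightarrow> int" where
  "tau2 n x = (if x \<in> pm n then
      (if x < 0 then (if x = - int n then 1 else - x + 1)
       else (if x = 1 then - int n else - (x - 1)))
    else x)"

text \<open>one_tilde n = (1,2,...,n)(-n,-n+1,...,-1)\<close>
definition one_tilde :: "nat \<Rightarrow> int \<Rightarrow> int" where
  "one_tilde n x = (if x \<in> pm n then
      (if x > 0 then (if x = int n then 1 else x + 1)
       else (if x = -1 then - int n else x + 1))
    else x)"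

definition cyc :: "('a \<Rightarrow> 'a) \<Rightarrow> 'a \<Rightarrow> 'a set" where
  "cyc \<sigma> x = {(\<sigma> ^^ k) x | k. True}"

definition ncycles :: "'a set \<Rightarrow> ('a \<Rightarrow> 'a) \<Rightarrow> nat" where
  "ncycles A \<sigma> = card {cyc \<sigma> x | x. x \<in> A}"

definition fpf_involution :: "'a set \<Rightarrow> ('a \<Rightarrow> 'a) \<Rightarrow> bool" where
  "fpf_involution A f \<longleftrightarrow> f permutes A \<and> (\<forall>x\<in>A. f (f x) = x \<and> f x \<noteq> x)"

inductive_set gen_group :: "('a \<Rightarrow> 'a) set \<Rightarrow> ('a \<Rightarrow> 'a) set" for Gs where
  gen_id: "id \<in> gen_group Gs"
| gen_mult: "\<lbrakk>s \<in> gen_group Gs; g \<in> Gs\<rbrakk> \<Longrightarrow> s \<circ> g \<in> gen_group Gs"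
| gen_mult_inv: "\<lbrakk>s \<in> gen_group Gs; g \<in> Gs\<rbrakk> \<Longrightarrow> s \<circ> inv g \<in> gen_group Gs"

definition b1 :: "nat \<Rightarrow> (int \<Rightarrow> int) set" where
  "b1 n = {t1. fpf_involution (pm n) t1
             \<and> ncycles (pm n) (tau2 n \<circ> t1) = n
             \<and> tau0 n \<circ> t1 = t1 \<circ> tau0 n
             \<and> (\<forall>x\<in>pm n. (tau0 n \<circ> t1) x \<noteq> x)
             \<and> (\<exists>a\<in>pos n. t1 a \<in> pos n)}"

definition NC2delta :: "nat \<Rightarrow> (int \<Rightarrow> int) set" where
  "NC2delta n = {\<pi>. fpf_involution (pm n) \<pi>
      \<and> (\<forall>x\<in>pm n. \<forall>y\<in>pm n. \<exists>g\<in>gen_group {\<pi>, one_tilde n}. g x = y)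
      \<and> ncycles (pm n) \<pi> + ncycles (pm n) (inv \<pi> \<circ> one_tilde n)
          + ncycles (pm n) (one_tilde n) = 2 * n + 2
      \<and> (\<forall>r\<in>pos n. \<not> (\<pi> (- r) = r))
      \<and> (\<forall>r\<in>pm n. \<forall>s\<in>pm n. r \<noteq> s \<and> \<pi> r = s \<longrightarrow> \<pi> (- s) = - r)}"

end

theory Submission
  imports Defs
begin

(* Put \<pi> = \<tau>1 \<tau>0, so that \<tau>1 = \<pi> \<tau>0 and \<tau>1(x) = \<pi>(-x) on \<plusminus>[n].  Then \<tau>1 commutes with \<tau>0
   iff \<pi> does, which for a fixed-point-free involution \<pi> is condition (iv); \<tau>0 \<tau>1 = \<pi>; and \<tau>1
   is fixed-point free iff \<pi> has no cycle (-r, r).  Writing \<omega> for one_tilde n, we have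
   \<tau>2 = \<tau>0 \<omega>\<inverse> and \<tau>0 \<omega> \<tau>0 = \<omega>\<inverse>, so \<tau>2 \<tau>1 is conjugate to \<pi> \<omega>; as \<pi> has n cycles and \<omega> has
   the two cycles [n] and -[n], condition (ii) says exactly #(\<tau>2 \<tau>1) = n.  Finally \<langle>\<pi>, \<omega>\<rangle> is
   transitive iff \<pi> joins these two cycles, i.e. iff \<tau>1(a) = \<pi>(-a) \<in> [n] for some a \<in> [n].
   So both sets are cut out by the same conditions on \<pi> (symmetric_nc_pairing), and \<tau>1 \<mapsto> \<tau>1 \<tau>0
   is its own inverse. *)

lemma comp_eq_id_apply: "f \<circ> g = id \<Longrightarrow> f (g x) = x"
  by (metis comp_apply id_apply)

lemma fpf_involution_comp_self:
  assumes "fpf_involution A f"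
  shows "f \<circ> f = id"
proof
  fix x
  show "(f \<circ> f) x = id x"
    using assms unfolding fpf_involution_def by (cases "x \<in> A") (auto simp: permutes_not_in)
qed

lemma funpow_involution: "f \<circ> f = id \<Longrightarrow> (f ^^ k) x = (if even k then x else f x)"
  by (induction k) (auto simp: fun_eq_iff)

lemma cyc_involution:
  assumes "f \<circ> f = id"
  shows "cyc f x = {x, f x}"
proof
  show "cyc f x \<subseteq> {x, f x}"
    unfolding cyc_def funpow_involution[OF assms] by auto
  have "x = (f ^^ 0) x" "f x = (f ^^ 1) x" by simp_all
  then show "{x, f x} \<subseteq> cyc f x"
    unfolding cyc_def by blast
qed

lemma ncycles_fpf_involution:
  assumes "fpf_involution A f" and "finite A"
  shows "2 * ncycles A f = card A"
proof -
  have ff: "f \<circ> f = id" by (rule fpf_involution_comp_self[OF assms(1)])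
  have f_in: "f x \<in> A" and f_ne: "f x \<noteq> x" if "x \<in> A" for x
    using assms(1) that by (auto simp: fpf_involution_def permutes_in_image)
  let ?C = "{cyc f x | x. x \<in> A}"
  have C: "?C = (\<lambda>x. {x, f x}) ` A"
    by (auto simp: cyc_involution[OF ff])
  have "2 * card ?C = card (\<Union>?C)"
  proof (rule card_partition)
    show "finite ?C" "finite (\<Union>?C)"
      unfolding C using assms(2) by auto
    show "card c = 2" if "c \<in> ?C" for c
      using that f_ne unfolding C by fastforce
    show "c1 \<inter> c2 = {}" if "c1 \<in> ?C" "c2 \<in> ?C" "c1 \<noteq> c2" for c1 c2
      using that comp_eq_id_apply[OF ff] unfolding C by auto metis+
  qed
  moreover have "\<Union>?C = A"
    unfolding C using f_in by auto
  ultimately show ?thesis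
    by (simp add: ncycles_def)
qed

lemma funpow_conj:
  assumes "g \<circ> h = id" and "h \<circ> g = id"
  shows "(h \<circ> s \<circ> g) ^^ k = h \<circ> s ^^ k \<circ> g"
proof (induction k)
  case 0
  then show ?case using assms(2) by simp
next
  case (Suc k)
  then show ?case
    by (simp add: fun_eq_iff comp_eq_id_apply[OF assms(1)])
qed

lemma cyc_conj:
  assumes "g \<circ> h = id" and "h \<circ> g = id"
  shows "cyc (h \<circ> s \<circ> g) (h x) = h ` cyc s x"
  unfolding cyc_def funpow_conj[OF assms] by (auto simp: comp_eq_id_apply[OF assms(1)])

lemma ncycles_conj:
  assumes "g \<circ> h = id" and "h \<circ> g = id" and "\<And>x. h x \<in> A \<longleftrightarrow> x \<in> A"
  shows "ncycles A (h \<circ> s \<circ> g) = ncycles A s"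
proof -
  have "{cyc (h \<circ> s \<circ> g) y | y. y \<in> A} = {cyc (h \<circ> s \<circ> g) (h x) | x. x \<in> A}"
    using assms(3) comp_eq_id_apply[OF assms(2)] by metis
  also have "\<dots> = image h ` {cyc s x | x. x \<in> A}"
    by (auto simp: cyc_conj[OF assms(1,2)])
  finally have cycles: "{cyc (h \<circ> s \<circ> g) y | y. y \<in> A} = image h ` {cyc s x | x. x \<in> A}" .
  have "inj h"
    using comp_eq_id_apply[OF assms(1)] by (metis injI)
  then have "inj_on (image h) X" for X
    by (meson inj_image_eq_iff inj_onI)
  then show ?thesis
    unfolding ncycles_def cycles by (simp add: card_image)
qed

lemma funpow_rotation:
  assumes rot: "\<And>y. y \<in> {c..<c + int n} \<Longrightarrow> f y = (y - c + 1) mod int n + c"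
    and x: "x \<in> {c..<c + int n}"
  shows "(f ^^ k) x = (x - c + int k) mod int n + c"
proof (induction k)
  case 0
  then show ?case using x by simp
next
  case (Suc k)
  have "int n > 0" using x by simp
  then have "(f ^^ k) x \<in> {c..<c + int n}"
    using Suc by simp
  then have "(f ^^ Suc k) x = ((x - c + int k) mod int n + 1) mod int n + c"
    using Suc rot by simp
  also have "\<dots> = (x - c + int k + 1) mod int n + c"
    by (simp add: mod_add_left_eq)
  finally show ?case by (simp add: ac_simps)
qed

lemma cyc_rotation:
  assumes rot: "\<And>y. y \<in> {c..<c + int n} \<Longrightarrow> f y = (y - c + 1) mod int n + c"
    and x: "x \<in> {c..<c + int n}"
  shows "cyc f x = {c..<c + int n}"
proof
  have n: "int n > 0" using x by simp
  have pow: "(f ^^ k) x = (x - c + int k) mod int n + c" for k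
    using rot x by (rule funpow_rotation)
  show "cyc f x \<subseteq> {c..<c + int n}"
  proof
    fix y assume "y \<in> cyc f x"
    then obtain k where "y = (x - c + int k) mod int n + c"
      unfolding cyc_def pow by blast
    then show "y \<in> {c..<c + int n}"
      using n by simp
  qed
  show "{c..<c + int n} \<subseteq> cyc f x"
  proof
    fix z assume z: "z \<in> {c..<c + int n}"
    have "(x - c + (z - x) mod int n) mod int n = (z - c) mod int n"
      by (simp add: mod_add_right_eq)
    then have "z = (f ^^ nat ((z - x) mod int n)) x"
      using n z by (simp add: pow)
    then show "z \<in> cyc f x"
      unfolding cyc_def by blast
  qed
qed

lemma gen_group_comp:
  assumes "t \<in> gen_group Gs" and "s \<in> gen_group Gs"
  shows "s \<circ> t \<in> gen_group Gs"
  using assms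
proof (induction rule: gen_group.induct)
  case gen_id
  then show ?case by simp
next
  case (gen_mult t g)
  then show ?case by (metis comp_assoc gen_group.gen_mult)
next
  case (gen_mult_inv t g)
  then show ?case by (metis comp_assoc gen_group.gen_mult_inv)
qed

lemma gen_group_funpow:
  assumes "g \<in> Gs"
  shows "g ^^ k \<in> gen_group Gs"
proof (induction k)
  case 0
  show ?case unfolding funpow_simps_right(1) by (rule gen_id)
next
  case (Suc k)
  show ?case
    using gen_mult[OF Suc assms] unfolding funpow_Suc_right .
qed

lemma gen_group_preserves:
  assumes "\<And>g x. g \<in> Gs \<Longrightarrow> x \<in> P \<Longrightarrow> g x \<in> P \<and> inv g x \<in> P"
  shows "s \<in> gen_group Gs \<Longrightarrow> x \<in> P \<Longrightarrow> s x \<in> P"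
  by (induction arbitrary: x rule: gen_group.induct) (simp_all add: assms)

definition neg :: "nat \<Rightarrow> int set" where
  "neg n = {-int n..-1}"

definition one_tilde_inv :: "nat \<Rightarrow> int \<Rightarrow> int" where
  "one_tilde_inv n x = (if x \<in> pm n then
      (if x > 0 then (if x = 1 then int n else x - 1)
       else (if x = - int n then -1 else x - 1))
    else x)"

lemma pm_eq_pos_Un_neg: "pm n = pos n \<union> neg n"
  by (auto simp: pm_def pos_def neg_def)

lemma pos_Int_neg: "pos n \<inter> neg n = {}"
  by (auto simp: pos_def neg_def)

lemma uminus_in_pm_iff [simp]: "- x \<in> pm n \<longleftrightarrow> x \<in> pm n"
  by (simp add: pm_def)

lemma uminus_in_pos_iff: "- x \<in> pos n \<longleftrightarrow> x \<in> neg n"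
  by (auto simp: pos_def neg_def)

lemma finite_pm: "finite (pm n)"
  by (simp add: pm_eq_pos_Un_neg pos_def neg_def)

lemma card_pm: "card (pm n) = 2 * n"
  by (simp add: pm_eq_pos_Un_neg pos_def neg_def card_Un_disjoint)

lemma tau0_apply: "x \<in> pm n \<Longrightarrow> tau0 n x = - x"
  by (simp add: tau0_def)

lemma tau0_tau0: "tau0 n (tau0 n x) = x"
  by (simp add: tau0_def)

lemma tau0_comp_tau0: "tau0 n \<circ> tau0 n = id"
  by (simp add: fun_eq_iff tau0_tau0)

lemma tau0_in_pm_iff: "tau0 n x \<in> pm n \<longleftrightarrow> x \<in> pm n"
  by (simp add: tau0_def)

lemma tau0_permutes: "tau0 n permutes pm n"
  unfolding permutes_def by (metis tau0_def tau0_tau0)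

lemma tau2_eq_tau0_comp: "tau2 n = tau0 n \<circ> one_tilde_inv n"
  by (auto simp: fun_eq_iff tau2_def tau0_def one_tilde_inv_def pm_def)

lemma tau0_one_tilde_tau0: "tau0 n \<circ> one_tilde n \<circ> tau0 n = one_tilde_inv n"
proof
  fix x
  show "(tau0 n \<circ> one_tilde n \<circ> tau0 n) x = one_tilde_inv n x"
    by (cases "x \<in> pm n"; cases "x > 0")
      (auto simp: one_tilde_def tau0_def one_tilde_inv_def pm_def)
qed

lemma inv_one_tilde: "inv (one_tilde n) = one_tilde_inv n"
  by (rule inv_unique_comp) (auto simp: fun_eq_iff one_tilde_def one_tilde_inv_def pm_def)

lemma cyc_one_tilde_pos:
  assumes "x \<in> pos n"
  shows "cyc (one_tilde n) x = pos n"
proof -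
  have pos: "pos n = {1..<1 + int n}" by (auto simp: pos_def)
  have "one_tilde n y = (y - 1 + 1) mod int n + 1" if "y \<in> {1..<1 + int n}" for y
    using that by (auto simp: one_tilde_def pm_def)
  then show ?thesis
    using cyc_rotation assms unfolding pos by blast
qed

lemma cyc_one_tilde_neg:
  assumes "x \<in> neg n"
  shows "cyc (one_tilde n) x = neg n"
proof -
  have neg: "neg n = {- int n..<- int n + int n}" by (auto simp: neg_def)
  have "one_tilde n y = (y - - int n + 1) mod int n + - int n"
    if "y \<in> {- int n..<- int n + int n}" for y
    using that by (auto simp: one_tilde_def pm_def)
  then show ?thesis
    using cyc_rotation assms unfolding neg by blast
qed

lemma ncycles_one_tilde:
  assumes "n \<ge> 1"
  shows "ncycles (pm n) (one_tilde n) = 2"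
proof -
  have "1 \<in> pos n" "- 1 \<in> neg n" "1 \<notin> neg n"
    using assms by (auto simp: pos_def neg_def)
  then have "{cyc (one_tilde n) x | x. x \<in> pm n} = {pos n, neg n}" and "pos n \<noteq> neg n"
    unfolding pm_eq_pos_Un_neg using cyc_one_tilde_pos cyc_one_tilde_neg by blast+
  then show ?thesis
    by (simp add: ncycles_def)
qed

lemma gen_group_maps_pos:
  assumes pp: "p \<circ> p = id" and p_pos: "\<And>x. x \<in> pos n \<Longrightarrow> p x \<in> pos n"
    and "g \<in> gen_group {p, one_tilde n}" and "x \<in> pos n"
  shows "g x \<in> pos n"
proof -
  have "inv p = p"
    by (rule inv_unique_comp[OF pp pp])
  moreover have "one_tilde n y \<in> pos n" "one_tilde_inv n y \<in> pos n" if "y \<in> pos n" for y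
    using that by (auto simp: one_tilde_def one_tilde_inv_def pos_def pm_def)
  ultimately have "h y \<in> pos n \<and> inv h y \<in> pos n" if "h \<in> {p, one_tilde n}" "y \<in> pos n" for h y
    using that p_pos by (auto simp: inv_one_tilde)
  then show ?thesis
    using assms(3,4) by (rule gen_group_preserves)
qed

lemma link_if_transitive_gen_group:
  assumes perm: "p permutes pm n" and pp: "p \<circ> p = id" and n: "n \<ge> 1"
    and transitive: "\<forall>x\<in>pm n. \<forall>y\<in>pm n. \<exists>g\<in>gen_group {p, one_tilde n}. g x = y"
  shows "\<exists>a\<in>neg n. p a \<in> pos n"
proof (rule ccontr)
  assume "\<not> (\<exists>a\<in>neg n. p a \<in> pos n)"
  then have p_neg: "p x \<in> neg n" if "x \<in> neg n" for x
    using that permutes_in_image[OF perm, of x] by (auto simp: pm_eq_pos_Un_neg)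
  have p_pos: "p x \<in> pos n" if "x \<in> pos n" for x
  proof (rule ccontr)
    assume "p x \<notin> pos n"
    then have "p x \<in> neg n"
      using that permutes_in_image[OF perm, of x] pm_eq_pos_Un_neg by blast
    then have "x \<in> neg n"
      using p_neg comp_eq_id_apply[OF pp, of x] by metis
    then show False
      using that pos_Int_neg by blast
  qed
  have "1 \<in> pm n" "-1 \<in> pm n"
    using n by (auto simp: pm_def)
  then obtain g where "g \<in> gen_group {p, one_tilde n}" "g 1 = -1"
    using transitive by blast
  moreover have "1 \<in> pos n" "-1 \<notin> pos n"
    using n by (auto simp: pos_def)
  ultimately show False
    using gen_group_maps_pos[OF pp p_pos] by metis
qed

lemma transitive_gen_group_if_link:
  assumes pp: "p \<circ> p = id" and a: "a \<in> neg n" "p a \<in> pos n"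
  shows "\<forall>x\<in>pm n. \<forall>y\<in>pm n. \<exists>g\<in>gen_group {p, one_tilde n}. g x = y"
proof -
  define reach where "reach x y \<longleftrightarrow> (\<exists>g\<in>gen_group {p, one_tilde n}. g x = y)" for x y
  have reach_trans: "reach x z" if "reach x y" "reach y z" for x y z
    using that gen_group_comp unfolding reach_def by (metis comp_apply)
  have reach_p: "reach x (p x)" for x
    using gen_group_funpow[of p _ 1] unfolding reach_def by auto
  have reach_cyc: "reach x y" if "y \<in> cyc (one_tilde n) x" for x y
    using that gen_group_funpow[of "one_tilde n"] unfolding reach_def cyc_def by blast
  have "p (p a) = a" by (rule comp_eq_id_apply[OF pp])
  then have "reach (p a) a" and "reach a (p a)"
    using reach_p by metis+
  then have "reach x a" and "reach a x" if "x \<in> pm n" for x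
    using that a reach_cyc reach_trans cyc_one_tilde_pos cyc_one_tilde_neg
    unfolding pm_eq_pos_Un_neg by blast+
  then show ?thesis
    using reach_trans unfolding reach_def by blast
qed

lemma ncycles_tau2_comp:
  assumes perm: "p permutes pm n" and pp: "p \<circ> p = id" and comm: "p \<circ> tau0 n = tau0 n \<circ> p"
  shows "ncycles (pm n) (tau2 n \<circ> (p \<circ> tau0 n)) = ncycles (pm n) (p \<circ> one_tilde n)"
proof -
  let ?T = "tau0 n"
  have "tau2 n \<circ> (p \<circ> ?T) = ?T \<circ> (one_tilde_inv n \<circ> p) \<circ> ?T"
    by (simp add: tau2_eq_tau0_comp comp_assoc)
  moreover have "one_tilde_inv n \<circ> p = p \<circ> (p \<circ> one_tilde_inv n) \<circ> p"
    by (simp add: fun_eq_iff comp_eq_id_apply[OF pp])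
  moreover have "p \<circ> one_tilde_inv n = ?T \<circ> (p \<circ> one_tilde n) \<circ> ?T"
  proof -
    have "one_tilde_inv n x = ?T (one_tilde n (?T x))" for x
      using tau0_one_tilde_tau0 by (metis comp_apply)
    moreover have "p (?T x) = ?T (p x)" for x
      using comm by (metis comp_apply)
    ultimately show ?thesis
      by (simp add: fun_eq_iff)
  qed
  moreover have "p x \<in> pm n \<longleftrightarrow> x \<in> pm n" for x
    by (rule permutes_in_image[OF perm])
  ultimately show ?thesis
    using ncycles_conj[OF tau0_comp_tau0 tau0_comp_tau0 tau0_in_pm_iff] ncycles_conj[OF pp pp]
    by metis
qed

lemma symmetric_iff_commute_tau0:
  assumes "fpf_involution (pm n) p"
  shows "(\<forall>r\<in>pm n. \<forall>s\<in>pm n. r \<noteq> s \<and> p r = s \<longrightarrow> p (- s) = - r)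
    \<longleftrightarrow> p \<circ> tau0 n = tau0 n \<circ> p"
proof -
  have perm: "p permutes pm n" and pp: "\<And>x. p (p x) = x" and fpf: "\<And>x. x \<in> pm n \<Longrightarrow> p x \<noteq> x"
    using assms comp_eq_id_apply[OF fpf_involution_comp_self[OF assms]]
    by (auto simp: fpf_involution_def)
  have p_in: "p x \<in> pm n \<longleftrightarrow> x \<in> pm n" for x
    by (rule permutes_in_image[OF perm])
  show ?thesis
  proof
    assume sym: "\<forall>r\<in>pm n. \<forall>s\<in>pm n. r \<noteq> s \<and> p r = s \<longrightarrow> p (- s) = - r"
    have "p (tau0 n x) = tau0 n (p x)" for x
    proof (cases "x \<in> pm n")
      case True
      then have "p (- x) = - p x"
        using sym p_in fpf pp by metis
      then show ?thesis using True p_in by (simp add: tau0_apply)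
    next
      case False
      then show ?thesis using p_in by (simp add: tau0_def permutes_not_in[OF perm])
    qed
    then show "p \<circ> tau0 n = tau0 n \<circ> p" by (simp add: fun_eq_iff)
  next
    assume "p \<circ> tau0 n = tau0 n \<circ> p"
    then have "p (- x) = - p x" if "x \<in> pm n" for x
      using that p_in by (metis comp_apply tau0_apply)
    then show "\<forall>r\<in>pm n. \<forall>s\<in>pm n. r \<noteq> s \<and> p r = s \<longrightarrow> p (- s) = - r"
      using pp by metis
  qed
qed

definition symmetric_nc_pairing :: "nat \<Rightarrow> (int \<Rightarrow> int) \<Rightarrow> bool" where
  "symmetric_nc_pairing n p \<longleftrightarrow> fpf_involution (pm n) p \<and> p \<circ> tau0 n = tau0 n \<circ> p
     \<and> (\<forall>r\<in>pos n. p (- r) \<noteq> r) \<and> ncycles (pm n) (p \<circ> one_tilde n) = n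
     \<and> (\<exists>a\<in>neg n. p a \<in> pos n)"

lemma mem_NC2delta_iff: "p \<in> NC2delta n \<longleftrightarrow> symmetric_nc_pairing n p"
proof (cases "fpf_involution (pm n) p \<and> n \<ge> 1")
  case False
  then consider "\<not> fpf_involution (pm n) p" | "n = 0"
    by linarith
  then show ?thesis
  proof cases
    case 1
    then show ?thesis
      by (simp add: NC2delta_def symmetric_nc_pairing_def)
  next
    case 2
    then have "pm n = {}" "neg n = {}"
      by (auto simp: pm_def neg_def)
    then show ?thesis
      by (simp add: NC2delta_def symmetric_nc_pairing_def ncycles_def)
  qed
next
  case True
  then have p: "fpf_involution (pm n) p" and n: "n \<ge> 1" by simp_all
  have pp: "p \<circ> p = id" and perm: "p permutes pm n"
    using fpf_involution_comp_self[OF p] p by (simp_all add: fpf_involution_def)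
  have "inv p = p"
    by (rule inv_unique_comp[OF pp pp])
  moreover have "ncycles (pm n) p = n"
    using ncycles_fpf_involution[OF p finite_pm] by (simp add: card_pm)
  ultimately have "ncycles (pm n) p + ncycles (pm n) (inv p \<circ> one_tilde n)
      + ncycles (pm n) (one_tilde n) = 2 * n + 2
    \<longleftrightarrow> ncycles (pm n) (p \<circ> one_tilde n) = n"
    using ncycles_one_tilde[OF n] by simp
  then show ?thesis
    unfolding NC2delta_def symmetric_nc_pairing_def
    using p link_if_transitive_gen_group[OF perm pp n] transitive_gen_group_if_link[OF pp]
      symmetric_iff_commute_tau0[OF p]
    by auto
qed

lemma symmetric_nc_pairing_comp_tau0:
  assumes "t \<in> b1 n"
  shows "symmetric_nc_pairing n (t \<circ> tau0 n)"
proof -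
  let ?T = "tau0 n"
  define p where "p = t \<circ> ?T"
  have t: "fpf_involution (pm n) t" and cycles: "ncycles (pm n) (tau2 n \<circ> t) = n"
    and comm: "?T \<circ> t = t \<circ> ?T" and fpf: "\<forall>x\<in>pm n. (?T \<circ> t) x \<noteq> x"
    and link: "\<exists>a\<in>pos n. t a \<in> pos n"
    using assms unfolding b1_def by blast+
  have tt: "t (t x) = x" for x
    by (rule comp_eq_id_apply[OF fpf_involution_comp_self[OF t]])
  have Tt: "?T (t x) = t (?T x)" for x
    using comm by (metis comp_apply)
  have perm: "p permutes pm n"
    unfolding p_def using tau0_permutes t by (simp add: fpf_involution_def permutes_compose)
  have pp: "p \<circ> p = id"
    by (simp add: p_def fun_eq_iff Tt tau0_tau0 tt)
  have p_comm: "p \<circ> ?T = ?T \<circ> p"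
    by (simp add: p_def fun_eq_iff Tt tau0_tau0)
  have "p x \<noteq> x" if "x \<in> pm n" for x
    using fpf that by (simp add: p_def Tt)
  then have p: "fpf_involution (pm n) p"
    unfolding fpf_involution_def using perm comp_eq_id_apply[OF pp] by blast
  have "p (- r) = t r" if "r \<in> pm n" for r
    using that by (simp add: p_def tau0_apply)
  then have "\<forall>r\<in>pos n. p (- r) \<noteq> r" and "\<exists>a\<in>neg n. p a \<in> pos n"
    using t link pm_eq_pos_Un_neg uminus_in_pos_iff unfolding fpf_involution_def
    by (metis UnCI, metis UnCI minus_minus)
  moreover have "ncycles (pm n) (p \<circ> one_tilde n) = n"
    using ncycles_tau2_comp[OF perm pp p_comm] cycles
    by (simp add: p_def comp_assoc tau0_comp_tau0)
  ultimately show ?thesis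
    unfolding symmetric_nc_pairing_def p_def[symmetric] using p p_comm by blast
qed

lemma fpf_involution_comp_tau0:
  assumes p: "fpf_involution (pm n) p" and comm: "p \<circ> tau0 n = tau0 n \<circ> p"
    and no_antipodal: "\<forall>r\<in>pos n. p (- r) \<noteq> r"
  shows "fpf_involution (pm n) (p \<circ> tau0 n)"
proof -
  have pp: "p \<circ> p = id"
    by (rule fpf_involution_comp_self[OF p])
  have perm: "p permutes pm n"
    using p by (simp add: fpf_involution_def)
  have pT: "p (tau0 n x) = tau0 n (p x)" for x
    using comm by (metis comp_apply)
  have "(p \<circ> tau0 n) x \<noteq> x" if "x \<in> pm n" for x
  proof (cases "x \<in> pos n")
    case True
    then show ?thesis using that no_antipodal by (simp add: tau0_apply)
  next
    case False
    then have "- x \<in> pos n"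
      using that uminus_in_pos_iff pm_eq_pos_Un_neg by auto
    then show ?thesis
      using that no_antipodal comp_eq_id_apply[OF pp] by (metis comp_apply minus_minus tau0_apply)
  qed
  moreover have "p \<circ> tau0 n permutes pm n"
    by (rule permutes_compose[OF tau0_permutes perm])
  moreover have "(p \<circ> tau0 n) ((p \<circ> tau0 n) x) = x" for x
    by (simp add: pT tau0_tau0 comp_eq_id_apply[OF pp])
  ultimately show ?thesis
    unfolding fpf_involution_def by blast
qed

lemma comp_tau0_mem_b1:
  assumes "symmetric_nc_pairing n p"
  shows "p \<circ> tau0 n \<in> b1 n"
proof -
  let ?T = "tau0 n"
  define t where "t = p \<circ> ?T"
  have p: "fpf_involution (pm n) p" and comm: "p \<circ> ?T = ?T \<circ> p"
    and no_antipodal: "\<forall>r\<in>pos n. p (- r) \<noteq> r"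
    and cycles: "ncycles (pm n) (p \<circ> one_tilde n) = n" and link: "\<exists>a\<in>neg n. p a \<in> pos n"
    using assms unfolding symmetric_nc_pairing_def by blast+
  have pp: "p \<circ> p = id"
    by (rule fpf_involution_comp_self[OF p])
  have perm: "p permutes pm n"
    using p by (simp add: fpf_involution_def)
  have pT: "p (?T x) = ?T (p x)" for x
    using comm by (metis comp_apply)
  have "fpf_involution (pm n) t"
    unfolding t_def using p comm no_antipodal by (rule fpf_involution_comp_tau0)
  moreover have "ncycles (pm n) (tau2 n \<circ> t) = n"
    using ncycles_tau2_comp[OF perm pp comm] cycles by (simp add: t_def)
  moreover have "?T \<circ> t = p" and "t \<circ> ?T = p"
    by (simp_all add: t_def fun_eq_iff pT tau0_tau0)
  moreover have "t x = p (- x)" if "x \<in> pm n" for x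
    using that by (simp add: t_def tau0_apply)
  then have "\<exists>a\<in>pos n. t a \<in> pos n"
    using link uminus_in_pos_iff pm_eq_pos_Un_neg by (metis UnCI minus_minus)
  ultimately show ?thesis
    unfolding b1_def t_def[symmetric] using p by (auto simp: fpf_involution_def)
qed

theorem proposition5:
  fixes n :: nat
  assumes "even n"
  shows "(\<forall>t1\<in>b1 n. t1 \<circ> tau0 n \<in> NC2delta n)
         \<and> bij_betw (\<lambda>t1. t1 \<circ> tau0 n) (b1 n) (NC2delta n)"
proof -
  have involutive: "(t \<circ> tau0 n) \<circ> tau0 n = t" for t :: "int \<Rightarrow> int"
    by (simp add: comp_assoc tau0_comp_tau0)
  have "\<forall>t\<in>b1 n. t \<circ> tau0 n \<in> NC2delta n"
    using symmetric_nc_pairing_comp_tau0 mem_NC2delta_iff by blast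
  moreover have "\<forall>p\<in>NC2delta n. p \<circ> tau0 n \<in> b1 n"
    using comp_tau0_mem_b1 mem_NC2delta_iff by blast
  ultimately show ?thesis
    using involutive by (auto intro!: bij_betw_byWitness[where f' = "\<lambda>p. p \<circ> tau0 n"])
qed

end
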